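(* Let $M,K\in\mathbb{R}^{m\times m}$ be symmetric positive definite matrices, let $\nu>0$, $\omega>0$, $\theta=1+\nu\omega^2$, and let $H_1=\begin{pmatrix} M&0\\0&M\end{pmatrix}$, $H_2=\begin{pmatrix} K&0\\0&K\end{pmatrix}$ and \[ R=\frac{1}{\sqrt{\nu\theta}}\begin{pmatrix} -i\omega\nu I & \sqrt{\nu}\, I\\ -\sqrt{\nu}\, I & i\omega\nu I\end{pmatrix}, \] where $I$ is the $m\times m$ identity. For $\alpha>0$ define the MBAS iteration matrix \[ P_\alpha=(\alpha I_{2m}+\sqrt{\nu\theta}H_2)^{-1}(\alpha I_{2m}+\theta RH_1)(\alpha I_{2m}+\theta H_1)^{-1}(\alpha I_{2m}-\sqrt{\nu\theta}RH_2). \] Then for every $\alpha>0$, \[ \rho(P_\alpha)\le \eta_\alpha:=\max_{\lambda\in\sigma(M)}\frac{\sqrt{\alpha^2+\theta^2\lambda^2}}{\alpha+\theta\lambda}\;\max_{\mu\in\sigma(K)}\frac{\sqrt{\alpha^2+\nu\theta\mu^2}}{\alpha+\sqrt{\nu\theta}\,\mu}<1 . \] In particular the MBAS iteration $x^{(k+1)}=P_\alpha x^{(k)}+Q_\alpha\tilde b$ converges for every $\alpha>0$ and every initial guess.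
   Context: $\rho(\cdot)$ denotes the spectral radius and $\sigma(\cdot)$ the spectrum of a matrix. The MBAS iteration for the system $\tilde A x=\tilde b$, with $\tilde A=\theta H_1+\sqrt{\nu\theta}RH_2$, is: given $x^{(k)}$, solve $(\alpha I+\theta H_1)x^{(k+1/2)}=(\alpha I-\sqrt{\nu\theta}RH_2)x^{(k)}+\tilde b$ and then $(\alpha I+\sqrt{\nu\theta}H_2)x^{(k+1)}=(\alpha I+\theta RH_1)x^{(k+1/2)}-R\tilde b$; eliminating $x^{(k+1/2)}$ gives $x^{(k+1)}=P_\alpha x^{(k)}+Q_\alpha\tilde b$ with $Q_\alpha=\alpha(\alpha I+\sqrt{\nu\theta}H_2)^{-1}(I-R)(\alpha I+\theta H_1)^{-1}$. *)

theory Defs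
  imports Complex_Main "Jordan_Normal_Form.Spectral_Radius" "Jordan_Normal_Form.Gauss_Jordan_Elimination"
begin

definition spd_mat :: "nat \<Rightarrow> real mat \<Rightarrow> bool" where
  "spd_mat n A \<longleftrightarrow> A \<in> carrier_mat n n \<and> transpose_mat A = A \<and>
     (\<forall>x \<in> carrier_vec n. x \<noteq> 0\<^sub>v n \<longrightarrow> x \<bullet> (A *\<^sub>v x) > 0)"

text \<open>Matrix inverse (meaningful for invertible square matrices).\<close>
definition minv :: "complex mat \<Rightarrow> complex mat" where
  "minv A = the (mat_inverse A)"

definition cmat :: "real mat \<Rightarrow> complex mat" where
  "cmat A = map_mat complex_of_real A"

definition blkdiag2 :: "nat \<Rightarrow> real mat \<Rightarrow> complex mat" where
  "blkdiag2 m A = four_block_mat (cmat A) (0\<^sub>m m m) (0\<^sub>m m m) (cmat A)"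

definition Rmat :: "nat \<Rightarrow> real \<Rightarrow> real \<Rightarrow> complex mat" where
  "Rmat m \<nu> \<omega> = (let \<theta> = 1 + \<nu> * \<omega>\<^sup>2 in
     complex_of_real (1 / sqrt (\<nu> * \<theta>)) \<cdot>\<^sub>m
       four_block_mat ((- \<i> * complex_of_real (\<omega> * \<nu>)) \<cdot>\<^sub>m 1\<^sub>m m)
                      (complex_of_real (sqrt \<nu>) \<cdot>\<^sub>m 1\<^sub>m m)
                      (complex_of_real (- sqrt \<nu>) \<cdot>\<^sub>m 1\<^sub>m m)
                      ((\<i> * complex_of_real (\<omega> * \<nu>)) \<cdot>\<^sub>m 1\<^sub>m m))"

definition P_MBAS :: "nat \<Rightarrow> real mat \<Rightarrow> real mat \<Rightarrow> real \<Rightarrow> real \<Rightarrow> real \<Rightarrow> complex mat" where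
  "P_MBAS m M K \<nu> \<omega> \<alpha> = (let \<theta> = 1 + \<nu> * \<omega>\<^sup>2; s = sqrt (\<nu> * \<theta>);
      H1 = blkdiag2 m M; H2 = blkdiag2 m K; R = Rmat m \<nu> \<omega>; I = 1\<^sub>m (2*m);
      a = complex_of_real \<alpha> in
     minv (a \<cdot>\<^sub>m I + complex_of_real s \<cdot>\<^sub>m H2) * (a \<cdot>\<^sub>m I + complex_of_real \<theta> \<cdot>\<^sub>m (R * H1))
     * minv (a \<cdot>\<^sub>m I + complex_of_real \<theta> \<cdot>\<^sub>m H1) * (a \<cdot>\<^sub>m I - complex_of_real s \<cdot>\<^sub>m (R * H2)))"

definition Q_MBAS :: "nat \<Rightarrow> real mat \<Rightarrow> real mat \<Rightarrow> real \<Rightarrow> real \<Rightarrow> real \<Rightarrow> complex mat" where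
  "Q_MBAS m M K \<nu> \<omega> \<alpha> = (let \<theta> = 1 + \<nu> * \<omega>\<^sup>2; s = sqrt (\<nu> * \<theta>);
      H1 = blkdiag2 m M; H2 = blkdiag2 m K; R = Rmat m \<nu> \<omega>; I = 1\<^sub>m (2*m);
      a = complex_of_real \<alpha> in
     a \<cdot>\<^sub>m (minv (a \<cdot>\<^sub>m I + complex_of_real s \<cdot>\<^sub>m H2) * (I - R)
     * minv (a \<cdot>\<^sub>m I + complex_of_real \<theta> \<cdot>\<^sub>m H1)))"

definition eta_MBAS :: "real mat \<Rightarrow> real mat \<Rightarrow> real \<Rightarrow> real \<Rightarrow> real \<Rightarrow> real" where
  "eta_MBAS M K \<nu> \<omega> \<alpha> = (let \<theta> = 1 + \<nu> * \<omega>\<^sup>2 in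
     Max ((\<lambda>l. sqrt (\<alpha>\<^sup>2 + \<theta>\<^sup>2 * l\<^sup>2) / (\<alpha> + \<theta> * l)) ` spectrum M) *
     Max ((\<lambda>\<mu>. sqrt (\<alpha>\<^sup>2 + \<nu> * \<theta> * \<mu>\<^sup>2) / (\<alpha> + sqrt (\<nu> * \<theta>) * \<mu>)) ` spectrum K))"

end

(*
  Write H = diag(S, S) for S = M or S = K.  The matrix R is skew-Hermitian, satisfies R^2 = -I
  and commutes with H, so the cross term vanishes in
    |(alpha I +- tau R H) u|^2 = alpha^2 |u|^2 + tau^2 |H u|^2.
  As H is Hermitian with spectrum sigma(S) > 0, the right-hand side is at most
  c^2 |(alpha I + tau H) u|^2, where c is the maximum of sqrt (alpha^2 + tau^2 l^2) / (alpha + tau l)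
  over l in sigma(S).  Instead of diagonalising H, this uses |X y| <= rho(X) |y| for Hermitian X,
  applied to X = H - kappa I after completing a square.  Chaining the estimates of the two
  half-steps along an eigenvector of P_alpha gives |lambda| <= eta_alpha < 1, and the iteration
  converges because the powers of P_alpha decay geometrically.
*)

theory Submission
  imports Defs
begin

section \<open>Inner product and norm on complex vectors\<close>

definition cinner :: "nat \<Rightarrow> complex vec \<Rightarrow> complex vec \<Rightarrow> complex" where
  "cinner n u v = (\<Sum>i=0..<n. u$i * cnj (v$i))"

definition cnorm2 :: "nat \<Rightarrow> complex vec \<Rightarrow> real" where
  "cnorm2 n u = (\<Sum>i=0..<n. (cmod (u$i))\<^sup>2)"

lemma cnorm2_nonneg: "cnorm2 n u \<ge> 0"
  unfolding cnorm2_def by (intro sum_nonneg) auto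

lemma cnorm2_eq_0_iff:
  assumes "u \<in> carrier_vec n"
  shows "cnorm2 n u = 0 \<longleftrightarrow> u = 0\<^sub>v n"
proof
  assume "cnorm2 n u = 0"
  then have "\<forall>i\<in>{0..<n}. (cmod (u$i))\<^sup>2 = 0"
    unfolding cnorm2_def by (subst sum_nonneg_eq_0_iff[symmetric]) auto
  then show "u = 0\<^sub>v n" using assms by (intro eq_vecI) auto
qed (simp add: cnorm2_def)

lemma cnorm2_pos:
  assumes "u \<in> carrier_vec n" "u \<noteq> 0\<^sub>v n"
  shows "cnorm2 n u > 0"
  using cnorm2_eq_0_iff[OF assms(1)] cnorm2_nonneg[of n u] assms(2) by linarith

lemma cinner_self: "cinner n u u = complex_of_real (cnorm2 n u)"
  unfolding cinner_def cnorm2_def of_real_sum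
  by (intro sum.cong refl) (simp add: complex_mult_cnj cmod_power2)

lemma cnj_cinner: "cnj (cinner n u v) = cinner n v u"
  unfolding cinner_def by (simp add: mult.commute)

lemma Re_cinner_commute: "Re (cinner n u v) = Re (cinner n v u)"
  by (metis cnj_cinner cnj.sel(1))

lemma cinner_smult_left:
  assumes "v \<in> carrier_vec n"
  shows "cinner n (c \<cdot>\<^sub>v v) w = c * cinner n v w"
  using assms unfolding cinner_def by (simp add: sum_distrib_left mult.assoc)

lemma cinner_smult_right:
  assumes "w \<in> carrier_vec n"
  shows "cinner n v (c \<cdot>\<^sub>v w) = cnj c * cinner n v w"
  using assms unfolding cinner_def by (simp add: sum_distrib_left ac_simps)

lemma cnorm2_smult:
  assumes "v \<in> carrier_vec n"
  shows "cnorm2 n (c \<cdot>\<^sub>v v) = (cmod c)\<^sup>2 * cnorm2 n v"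
  using assms unfolding cnorm2_def by (simp add: norm_mult power_mult_distrib sum_distrib_left)

lemma cnorm2_lincomb:
  assumes "\<And>i. i < n \<Longrightarrow> z$i = complex_of_real a * x$i + complex_of_real b * y$i"
  shows "cnorm2 n z = a\<^sup>2 * cnorm2 n x + 2 * a * b * Re (cinner n y x) + b\<^sup>2 * cnorm2 n y"
proof -
  have "(cmod (complex_of_real a * p + complex_of_real b * q))\<^sup>2
      = a\<^sup>2 * (cmod p)\<^sup>2 + 2 * a * b * Re (q * cnj p) + b\<^sup>2 * (cmod q)\<^sup>2" for p q
    unfolding cmod_power2 by (simp add: power2_eq_square algebra_simps)
  then have "cnorm2 n z = (\<Sum>i=0..<n. a\<^sup>2 * (cmod (x$i))\<^sup>2 + 2 * a * b * Re (y$i * cnj (x$i))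
      + b\<^sup>2 * (cmod (y$i))\<^sup>2)"
    unfolding cnorm2_def using assms by (intro sum.cong) auto
  then show ?thesis
    unfolding cnorm2_def cinner_def Re_sum by (simp only: sum.distrib flip: sum_distrib_left)
qed

lemma Re_cinner_square_le: "(Re (cinner n u v))\<^sup>2 \<le> cnorm2 n u * cnorm2 n v"
proof (cases "cnorm2 n u = 0")
  case True
  then have "\<forall>i\<in>{0..<n}. (cmod (u$i))\<^sup>2 = 0"
    unfolding cnorm2_def by (subst sum_nonneg_eq_0_iff[symmetric]) auto
  then have "cinner n u v = 0" unfolding cinner_def by (intro sum.neutral) auto
  then show ?thesis using True by simp
next
  case False
  then have u: "cnorm2 n u > 0" using cnorm2_nonneg[of n u] by linarith
  define p where "p = Re (cinner n u v)"
  define l where "l = p / cnorm2 n u"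
  have "0 \<le> cnorm2 n (vec n (\<lambda>i. complex_of_real l * u$i + complex_of_real (-1) * v$i))"
    by (rule cnorm2_nonneg)
  also have "\<dots> = l\<^sup>2 * cnorm2 n u - 2 * l * Re (cinner n v u) + cnorm2 n v"
    by (subst cnorm2_lincomb[where a = l and b = "-1" and x = u and y = v]) auto
  also have "\<dots> = l\<^sup>2 * cnorm2 n u - 2 * l * p + cnorm2 n v"
    unfolding p_def by (simp add: Re_cinner_commute)
  also have "\<dots> = cnorm2 n v - p\<^sup>2 / cnorm2 n u"
    unfolding l_def using u by (simp add: power2_eq_square field_simps)
  finally show ?thesis using u unfolding p_def by (simp add: field_simps)
qed

lemma index_mult_mat_vec_sum:
  assumes "A \<in> carrier_mat n n" "v \<in> carrier_vec n" "i < n"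
  shows "(A *\<^sub>v v) $ i = (\<Sum>j=0..<n. A$$(i,j) * v$j)"
  using assms by (auto simp: scalar_prod_def)

lemma smult_mult_mat_vec:
  assumes "A \<in> carrier_mat nr nc" "v \<in> carrier_vec nc"
  shows "(c \<cdot>\<^sub>m A) *\<^sub>v v = c \<cdot>\<^sub>v (A *\<^sub>v v)"
  using assms by (intro eq_vecI) (auto simp: scalar_prod_def sum_distrib_left mult.assoc)

lemma index_smult_one_mult_mat_vec:
  fixes A :: "complex mat"
  assumes A: "A \<in> carrier_mat n n" and y: "y \<in> carrier_vec n" and i: "i < n"
  shows "((a \<cdot>\<^sub>m 1\<^sub>m n + b \<cdot>\<^sub>m A) *\<^sub>v y) $ i = a * y$i + b * (A *\<^sub>v y) $ i"
    and "((a \<cdot>\<^sub>m 1\<^sub>m n - b \<cdot>\<^sub>m A) *\<^sub>v y) $ i = a * y$i - b * (A *\<^sub>v y) $ i"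
    and "((A - b \<cdot>\<^sub>m 1\<^sub>m n) *\<^sub>v y) $ i = (A *\<^sub>v y) $ i - b * y$i"
proof -
  have I: "(c \<cdot>\<^sub>m 1\<^sub>m n) *\<^sub>v y = c \<cdot>\<^sub>v y" for c
    using smult_mult_mat_vec[OF one_carrier_mat y] by (simp add: one_mult_mat_vec[OF y])
  have B: "(c \<cdot>\<^sub>m A) *\<^sub>v y = c \<cdot>\<^sub>v (A *\<^sub>v y)" for c by (rule smult_mult_mat_vec[OF A y])
  have "(a \<cdot>\<^sub>m 1\<^sub>m n + b \<cdot>\<^sub>m A) *\<^sub>v y = a \<cdot>\<^sub>v y + b \<cdot>\<^sub>v (A *\<^sub>v y)"
    using A y by (simp add: add_mult_distrib_mat_vec[of _ n n] I B del: index_mult_mat_vec)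
  then show "((a \<cdot>\<^sub>m 1\<^sub>m n + b \<cdot>\<^sub>m A) *\<^sub>v y) $ i = a * y$i + b * (A *\<^sub>v y) $ i"
    using A y i by simp
  have "(a \<cdot>\<^sub>m 1\<^sub>m n - b \<cdot>\<^sub>m A) *\<^sub>v y = a \<cdot>\<^sub>v y - b \<cdot>\<^sub>v (A *\<^sub>v y)"
    using A y by (simp add: minus_mult_distrib_mat_vec[of _ n n] I B del: index_mult_mat_vec)
  then show "((a \<cdot>\<^sub>m 1\<^sub>m n - b \<cdot>\<^sub>m A) *\<^sub>v y) $ i = a * y$i - b * (A *\<^sub>v y) $ i"
    using A y i by simp
  have "(A - b \<cdot>\<^sub>m 1\<^sub>m n) *\<^sub>v y = A *\<^sub>v y - b \<cdot>\<^sub>v y"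
    using A y by (simp add: minus_mult_distrib_mat_vec[of _ n n] I del: index_mult_mat_vec)
  then show "((A - b \<cdot>\<^sub>m 1\<^sub>m n) *\<^sub>v y) $ i = (A *\<^sub>v y) $ i - b * y$i"
    using A y i by simp
qed

lemma cinner_mult_mat_vec_adjoint:
  assumes A: "A \<in> carrier_mat n n" and B: "B \<in> carrier_mat n n"
    and adj: "\<And>i j. i < n \<Longrightarrow> j < n \<Longrightarrow> A$$(i,j) = cnj (B$$(j,i))"
    and u: "u \<in> carrier_vec n" and v: "v \<in> carrier_vec n"
  shows "cinner n (A *\<^sub>v u) v = cinner n u (B *\<^sub>v v)"
proof -
  have "cinner n (A *\<^sub>v u) v = (\<Sum>i=0..<n. \<Sum>j=0..<n. A$$(i,j) * u$j * cnj (v$i))"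
    unfolding cinner_def by (simp add: index_mult_mat_vec_sum[OF A u] sum_distrib_right)
  also have "\<dots> = (\<Sum>j=0..<n. \<Sum>i=0..<n. A$$(i,j) * u$j * cnj (v$i))" by (rule sum.swap)
  also have "\<dots> = (\<Sum>j=0..<n. u$j * cnj (\<Sum>i=0..<n. B$$(j,i) * v$i))"
  proof (intro sum.cong refl)
    fix j assume j: "j \<in> {0..<n}"
    have "(\<Sum>i=0..<n. A$$(i,j) * u$j * cnj (v$i)) = (\<Sum>i=0..<n. u$j * cnj (B$$(j,i) * v$i))"
      using j by (intro sum.cong refl) (simp add: adj)
    then show "(\<Sum>i=0..<n. A$$(i,j) * u$j * cnj (v$i)) = u$j * cnj (\<Sum>i=0..<n. B$$(j,i) * v$i)"
      by (simp only: cnj_sum sum_distrib_left)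
  qed
  also have "\<dots> = cinner n u (B *\<^sub>v v)"
    unfolding cinner_def by (intro sum.cong refl) (simp add: index_mult_mat_vec_sum[OF B v])
  finally show ?thesis .
qed

section \<open>Hermitian and skew-Hermitian matrices\<close>

definition hermitian_mat :: "nat \<Rightarrow> complex mat \<Rightarrow> bool" where
  "hermitian_mat n A \<longleftrightarrow> A \<in> carrier_mat n n \<and> (\<forall>i<n. \<forall>j<n. A$$(i,j) = cnj (A$$(j,i)))"

lemma hermitian_matD:
  assumes "hermitian_mat n A"
  shows "A \<in> carrier_mat n n" "\<And>i j. i < n \<Longrightarrow> j < n \<Longrightarrow> cnj (A$$(j,i)) = A$$(i,j)"
  using assms unfolding hermitian_mat_def by (blast, metis)

lemma cinner_hermitian:
  assumes "hermitian_mat n A" "u \<in> carrier_vec n" "v \<in> carrier_vec n"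
  shows "cinner n (A *\<^sub>v u) v = cinner n u (A *\<^sub>v v)"
  using cinner_mult_mat_vec_adjoint[OF _ _ hermitian_matD(2)[OF assms(1), symmetric] assms(2,3)]
    hermitian_matD(1)[OF assms(1)] by blast

lemma eigenvalue_hermitian_real:
  assumes A: "hermitian_mat n A" and ev: "eigenvector A v \<mu>"
  shows "\<mu> = complex_of_real (Re \<mu>)"
proof -
  have v: "v \<in> carrier_vec n" "v \<noteq> 0\<^sub>v n" and Av: "A *\<^sub>v v = \<mu> \<cdot>\<^sub>v v"
    using ev hermitian_matD(1)[OF A] unfolding eigenvector_def by auto
  have "\<mu> * cnorm2 n v = cinner n (A *\<^sub>v v) v"
    by (simp add: Av cinner_smult_left[OF v(1)] cinner_self)
  also have "\<dots> = cinner n v (A *\<^sub>v v)" by (rule cinner_hermitian[OF A v(1) v(1)])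
  also have "\<dots> = cnj (cinner n (A *\<^sub>v v) v)" by (rule cnj_cinner[symmetric])
  also have "\<dots> = cnj \<mu> * cnorm2 n v"
    by (simp add: Av cinner_smult_left[OF v(1)] cinner_self)
  finally have "\<mu> = cnj \<mu>"
    using cnorm2_pos[OF v] by (metis mult_right_cancel of_real_eq_0_iff less_irrefl)
  then have "Im \<mu> = - Im \<mu>" by (metis cnj.sel(2))
  then show ?thesis by (simp add: complex_eq_iff)
qed

lemma hermitian_minus_smult_one:
  assumes "hermitian_mat n A"
  shows "hermitian_mat n (A - complex_of_real c \<cdot>\<^sub>m 1\<^sub>m n)"
proof -
  have "A - complex_of_real c \<cdot>\<^sub>m 1\<^sub>m n \<in> carrier_mat n n"
    using hermitian_matD(1)[OF assms] by (intro minus_carrier_mat) simp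
  moreover have "(A - complex_of_real c \<cdot>\<^sub>m 1\<^sub>m n) $$ (i,j)
      = cnj ((A - complex_of_real c \<cdot>\<^sub>m 1\<^sub>m n) $$ (j,i))" if "i < n" "j < n" for i j
  proof -
    have A: "A \<in> carrier_mat n n" by (rule hermitian_matD(1)[OF assms])
    have entries: "(A - complex_of_real c \<cdot>\<^sub>m 1\<^sub>m n) $$ (i,j) = A $$ (i,j) - (if i = j then c else 0)"
      "(A - complex_of_real c \<cdot>\<^sub>m 1\<^sub>m n) $$ (j,i) = A $$ (j,i) - (if j = i then c else 0)"
      using A that by auto
    show ?thesis unfolding entries complex_cnj_diff hermitian_matD(2)[OF assms that] by simp
  qed
  ultimately show ?thesis unfolding hermitian_mat_def by blast
qed

lemma eigenvector_minus_smult_one: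
  fixes A :: "complex mat"
  assumes A: "A \<in> carrier_mat n n" and ev: "eigenvector (A - c \<cdot>\<^sub>m 1\<^sub>m n) v \<mu>"
  shows "eigenvector A v (\<mu> + c)"
proof -
  have v: "v \<in> carrier_vec n" "v \<noteq> 0\<^sub>v n" and Xv: "(A - c \<cdot>\<^sub>m 1\<^sub>m n) *\<^sub>v v = \<mu> \<cdot>\<^sub>v v"
    using ev A unfolding eigenvector_def by auto
  have "A *\<^sub>v v = (\<mu> + c) \<cdot>\<^sub>v v"
  proof (rule eq_vecI)
    fix i assume "i < dim_vec ((\<mu> + c) \<cdot>\<^sub>v v)"
    then have i: "i < n" using v by simp
    show "(A *\<^sub>v v) $ i = ((\<mu> + c) \<cdot>\<^sub>v v) $ i"
      using arg_cong[OF Xv, of "\<lambda>x. x $ i"] index_smult_one_mult_mat_vec(3)[OF A v(1) i] i v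
      by (simp add: distrib_right diff_eq_eq)
  qed (use A v in simp)
  then show ?thesis using A v unfolding eigenvector_def by auto
qed

lemma cinner_skew:
  assumes R: "R \<in> carrier_mat n n"
    and skew: "\<And>i j. i < n \<Longrightarrow> j < n \<Longrightarrow> R$$(i,j) = - cnj (R$$(j,i))"
    and u: "u \<in> carrier_vec n" and v: "v \<in> carrier_vec n"
  shows "cinner n (R *\<^sub>v u) v = - cinner n u (R *\<^sub>v v)"
proof -
  have adj: "R$$(i,j) = cnj (((-1) \<cdot>\<^sub>m R) $$ (j,i))" if "i < n" "j < n" for i j
  proof -
    have "R$$(i,j) = - cnj (R$$(j,i))" by (rule skew[OF that])
    also have "\<dots> = cnj (((-1) \<cdot>\<^sub>m R) $$ (j,i))" using R that by simp
    finally show ?thesis .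
  qed
  have "cinner n (R *\<^sub>v u) v = cinner n u (((-1) \<cdot>\<^sub>m R) *\<^sub>v v)"
    by (rule cinner_mult_mat_vec_adjoint[OF R _ adj u v]) (use R in simp)
  also have "\<dots> = - cinner n u (R *\<^sub>v v)"
    using R v by (simp add: smult_mult_mat_vec[OF R v] cinner_smult_right)
  finally show ?thesis .
qed

lemma cnorm2_smult_one_add_skew_hermitian:
  assumes R: "R \<in> carrier_mat n n"
    and skew: "\<And>i j. i < n \<Longrightarrow> j < n \<Longrightarrow> R$$(i,j) = - cnj (R$$(j,i))"
    and RR: "R * R = (-1) \<cdot>\<^sub>m 1\<^sub>m n"
    and H: "hermitian_mat n H" and comm: "R * H = H * R" and y: "y \<in> carrier_vec n"
    and z: "\<And>i. i < n \<Longrightarrow> z$i = complex_of_real \<alpha> * y$i + complex_of_real t * ((R * H) *\<^sub>v y)$i"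
  shows "cnorm2 n z = \<alpha>\<^sup>2 * cnorm2 n y + t\<^sup>2 * cnorm2 n (H *\<^sub>v y)"
proof -
  have Hc: "H \<in> carrier_mat n n" by (rule hermitian_matD(1)[OF H])
  define h where "h = H *\<^sub>v y"
  define w where "w = R *\<^sub>v h"
  have h: "h \<in> carrier_vec n" and Ry: "R *\<^sub>v y \<in> carrier_vec n" unfolding h_def using Hc R y by auto
  have w: "w \<in> carrier_vec n" and RHy: "(R * H) *\<^sub>v y = w"
    unfolding w_def h_def using Hc R y by (auto simp: assoc_mult_mat_vec[of _ n n _ n])
  have "cnorm2 n z = \<alpha>\<^sup>2 * cnorm2 n y + 2 * \<alpha> * t * Re (cinner n w y) + t\<^sup>2 * cnorm2 n w"
    by (rule cnorm2_lincomb) (simp add: z RHy)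
  moreover have "Re (cinner n w y) = 0"
  proof -
    have "H *\<^sub>v (R *\<^sub>v y) = w"
      unfolding RHy[symmetric] comm using Hc R y by (simp add: assoc_mult_mat_vec[of _ n n _ n])
    then have hRy: "cinner n h (R *\<^sub>v y) = cinner n y w"
      unfolding h_def by (simp add: cinner_hermitian[OF H y Ry])
    have "cinner n w y = - cinner n h (R *\<^sub>v y)" unfolding w_def by (rule cinner_skew[OF R skew h y])
    also have "\<dots> = - cnj (cinner n w y)" by (simp only: hRy cnj_cinner)
    finally have "cinner n w y = - cnj (cinner n w y)" .
    then show ?thesis by (metis add.inverse_neutral cnj.sel(1) equal_neg_zero uminus_complex.sel(1))
  qed
  moreover have "cnorm2 n w = cnorm2 n h"
  proof -
    have "R *\<^sub>v w = (-1) \<cdot>\<^sub>v h"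
      unfolding w_def using R h
      by (simp add: assoc_mult_mat_vec[symmetric, of _ n n _ n] RR smult_mult_mat_vec[OF one_carrier_mat h])
    then have "cinner n h (R *\<^sub>v w) = - cinner n h h" using h by (simp add: cinner_smult_right)
    moreover have "cinner n w w = - cinner n h (R *\<^sub>v w)"
      using cinner_skew[OF R skew h w] unfolding w_def .
    ultimately have "cinner n w w = cinner n h h" by simp
    then show ?thesis unfolding cinner_self by simp
  qed
  ultimately show ?thesis unfolding h_def by simp
qed

section \<open>Growth of matrix powers\<close>

lemma spectral_radius_nonneg:
  assumes "A \<in> carrier_mat n n" "0 < n"
  shows "0 \<le> spectral_radius A"
  using spectral_radius_mem_max(1)[OF assms] by auto

lemma spectral_radius_scaled_less_1:
  assumes A: "A \<in> carrier_mat n n" and n: "0 < n" and r: "spectral_radius A < r"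
  shows "spectral_radius (complex_of_real (1/r) \<cdot>\<^sub>m A) < 1"
proof -
  have r0: "r > 0" using spectral_radius_nonneg[OF A n] r by simp
  define W where "W = complex_of_real (1/r) \<cdot>\<^sub>m A"
  have W: "W \<in> carrier_mat n n" unfolding W_def using A by simp
  obtain \<mu> where "\<mu> \<in> spectrum W" and \<rho>W: "spectral_radius W = cmod \<mu>"
    using spectral_radius_mem_max(1)[OF W n] by auto
  then obtain v where "eigenvector W v \<mu>" unfolding spectrum_def eigenvalue_def by auto
  then have v: "v \<in> carrier_vec n" "v \<noteq> 0\<^sub>v n" and Wv: "W *\<^sub>v v = \<mu> \<cdot>\<^sub>v v"
    using W unfolding eigenvector_def by auto
  have "A *\<^sub>v v = complex_of_real r \<cdot>\<^sub>v (W *\<^sub>v v)"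
    unfolding W_def smult_mult_mat_vec[OF A v(1)] smult_smult_assoc
    using r0 by (simp flip: of_real_mult)
  then have "A *\<^sub>v v = (complex_of_real r * \<mu>) \<cdot>\<^sub>v v" by (simp add: Wv smult_smult_assoc)
  then have "complex_of_real r * \<mu> \<in> spectrum A"
    using v A unfolding spectrum_def eigenvalue_def eigenvector_def by auto
  then have "r * cmod \<mu> \<le> spectral_radius A"
    using spectral_radius_mem_max(2)[OF A n] r0 by (fastforce simp: norm_mult)
  then have "r * cmod \<mu> < r * 1" using r by simp
  then show ?thesis using r0 \<rho>W unfolding W_def by simp
qed

lemma pow_smult_mat:
  assumes A: "A \<in> carrier_mat n n"
  shows "(c \<cdot>\<^sub>m A) ^\<^sub>m k = (c ^ k) \<cdot>\<^sub>m (A ^\<^sub>m k :: 'a :: comm_ring_1 mat)"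
proof (induction k)
  case 0 then show ?case using A by (intro eq_matI) auto
next
  case (Suc k)
  have Ak: "A ^\<^sub>m k \<in> carrier_mat n n" using A by simp
  have "(c \<cdot>\<^sub>m A) ^\<^sub>m Suc k = c ^ k \<cdot>\<^sub>m (A ^\<^sub>m k * (c \<cdot>\<^sub>m A))"
    using Suc by (simp add: mult_smult_assoc_mat[OF Ak smult_carrier_mat[OF A]])
  also have "\<dots> = (c ^ Suc k) \<cdot>\<^sub>m (A ^\<^sub>m Suc k)"
    unfolding mult_smult_distrib[OF Ak A] using A by (intro eq_matI) auto
  finally show ?case .
qed

lemma spectral_radius_pow_norm_bound:
  assumes A: "A \<in> carrier_mat n n" and n: "0 < n" and r: "spectral_radius A < r"
  obtains C where "\<And>k. norm_bound (A ^\<^sub>m k) (C * r ^ k)"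
proof -
  have r0: "r > 0" using spectral_radius_nonneg[OF A n] r by simp
  define W where "W = complex_of_real (1/r) \<cdot>\<^sub>m A"
  have W: "W \<in> carrier_mat n n" unfolding W_def using A by simp
  obtain C where C: "\<And>k. norm_bound (W ^\<^sub>m k) C"
    using spectral_radius_jnf_norm_bound_less_1_upper_triangular[OF W]
      spectral_radius_scaled_less_1[OF A n r] unfolding W_def by auto
  have AW: "A = complex_of_real r \<cdot>\<^sub>m W"
    unfolding W_def using r0 by (intro eq_matI) (auto simp flip: of_real_mult)
  have "norm_bound (A ^\<^sub>m k) (C * r ^ k)" for k
  proof (rule norm_boundI)
    fix i j assume "i < dim_row (A ^\<^sub>m k)" "j < dim_col (A ^\<^sub>m k)"
    then have ij: "i < dim_row (W ^\<^sub>m k)" "j < dim_col (W ^\<^sub>m k)" using A W by auto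
    have "cmod ((A ^\<^sub>m k) $$ (i,j)) = r ^ k * cmod ((W ^\<^sub>m k) $$ (i,j))"
      unfolding AW pow_smult_mat[OF W] using ij r0 by (simp add: norm_mult norm_power)
    also have "\<dots> \<le> r ^ k * C"
      using C[of k] ij r0 unfolding norm_bound_def by (intro mult_left_mono) auto
    finally show "cmod ((A ^\<^sub>m k) $$ (i,j)) \<le> C * r ^ k" by (simp add: mult.commute)
  qed
  then show ?thesis by (rule that)
qed

lemma norm_bound_mult_mat_vec:
  assumes B: "B \<in> carrier_mat n n" and C: "norm_bound B C" and y: "y \<in> carrier_vec n"
    and i: "i < n"
  shows "cmod ((B *\<^sub>v y) $ i) \<le> C * (\<Sum>j=0..<n. cmod (y$j))"
proof -
  have "cmod ((B *\<^sub>v y) $ i) \<le> (\<Sum>j=0..<n. cmod (B$$(i,j) * y$j))"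
    unfolding index_mult_mat_vec_sum[OF B y i] by (rule norm_sum)
  also have "\<dots> \<le> (\<Sum>j=0..<n. C * cmod (y$j))"
    using C B i unfolding norm_bound_def
    by (intro sum_mono) (auto simp: norm_mult intro!: mult_right_mono)
  finally show ?thesis by (simp add: sum_distrib_left)
qed

lemma cnorm2_pow_mult_mat_vec_bound:
  assumes A: "A \<in> carrier_mat n n" and n: "0 < n" and r: "spectral_radius A < r"
    and y: "y \<in> carrier_vec n"
  obtains D where "\<And>k. cnorm2 n (A ^\<^sub>m k *\<^sub>v y) \<le> D * (r\<^sup>2) ^ k"
proof -
  obtain C where C: "\<And>k. norm_bound (A ^\<^sub>m k) (C * r ^ k)"
    using spectral_radius_pow_norm_bound[OF A n r] by blast
  define Y where "Y = (\<Sum>j=0..<n. cmod (y$j))"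
  have "cnorm2 n (A ^\<^sub>m k *\<^sub>v y) \<le> (\<Sum>i=0..<n. (C * r ^ k * Y)\<^sup>2)" for k
    unfolding cnorm2_def Y_def using norm_bound_mult_mat_vec[OF pow_carrier_mat[OF A] C y]
    by (intro sum_mono power_mono) auto
  also have "(\<Sum>i=0..<n. (C * r ^ k * Y)\<^sup>2) = (n * (C * Y)\<^sup>2) * (r\<^sup>2) ^ k" for k
    by (simp add: power_mult_distrib power_mult[symmetric] mult.commute[of 2])
  finally show ?thesis by (rule that)
qed

lemma pow_mat_commute:
  assumes A: "A \<in> carrier_mat n n"
  shows "A * A ^\<^sub>m k = A ^\<^sub>m k * A"
proof (induction k)
  case 0 then show ?case using A by simp
next
  case (Suc k)
  have "A * A ^\<^sub>m Suc k = (A * A ^\<^sub>m k) * A"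
    using A by (simp add: assoc_mult_mat[of A n n "A ^\<^sub>m k" n A n])
  then show ?case by (simp add: Suc)
qed

lemma pow_mat_Suc_mult_mat_vec:
  assumes "A \<in> carrier_mat n n" "y \<in> carrier_vec n"
  shows "A ^\<^sub>m Suc k *\<^sub>v y = A *\<^sub>v (A ^\<^sub>m k *\<^sub>v y)"
  using assms by (simp add: pow_mat_commute[symmetric] assoc_mult_mat_vec[of _ n n _ n])

section \<open>Spectral bounds for Hermitian matrices\<close>

lemma cnorm2_pow_hermitian_log_convex:
  assumes A: "hermitian_mat n A" and y: "y \<in> carrier_vec n"
  shows "(cnorm2 n (A ^\<^sub>m Suc k *\<^sub>v y))\<^sup>2
    \<le> cnorm2 n (A ^\<^sub>m k *\<^sub>v y) * cnorm2 n (A ^\<^sub>m Suc (Suc k) *\<^sub>v y)"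
proof -
  have Ac: "A \<in> carrier_mat n n" by (rule hermitian_matD(1)[OF A])
  define z where "z = A ^\<^sub>m k *\<^sub>v y"
  define w where "w = A ^\<^sub>m Suc k *\<^sub>v y"
  have z: "z \<in> carrier_vec n" and w: "w \<in> carrier_vec n"
    unfolding z_def w_def using mult_mat_vec_carrier[OF pow_carrier_mat[OF Ac] y] by blast+
  have Az: "A *\<^sub>v z = w" and Aw: "A *\<^sub>v w = A ^\<^sub>m Suc (Suc k) *\<^sub>v y"
    unfolding z_def w_def by (simp_all only: pow_mat_Suc_mult_mat_vec[OF Ac y])
  have "cnorm2 n w = Re (cinner n (A *\<^sub>v z) w)" by (simp add: Az cinner_self)
  also have "\<dots> = Re (cinner n z (A ^\<^sub>m Suc (Suc k) *\<^sub>v y))"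
    by (simp only: cinner_hermitian[OF A z w] Aw)
  finally have "(cnorm2 n w)\<^sup>2 = (Re (cinner n z (A ^\<^sub>m Suc (Suc k) *\<^sub>v y)))\<^sup>2" by simp
  also have "\<dots> \<le> cnorm2 n z * cnorm2 n (A ^\<^sub>m Suc (Suc k) *\<^sub>v y)" by (rule Re_cinner_square_le)
  finally show ?thesis unfolding z_def w_def .
qed

lemma cnorm2_pow_hermitian_lower_bound:
  assumes A: "hermitian_mat n A" and y: "y \<in> carrier_vec n" and y0: "cnorm2 n y > 0"
    and q: "q > 0" and Ay: "q * cnorm2 n y \<le> cnorm2 n (A *\<^sub>v y)"
  shows "q ^ k * cnorm2 n y \<le> cnorm2 n (A ^\<^sub>m k *\<^sub>v y)"
proof -
  have Ac: "A \<in> carrier_mat n n" by (rule hermitian_matD(1)[OF A])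
  define h where "h k = cnorm2 n (A ^\<^sub>m k *\<^sub>v y)" for k
  have grow: "q * h k \<le> h (Suc k) \<and> h k > 0" for k
  proof (induction k)
    case 0 show ?case using y0 Ay Ac y unfolding h_def by simp
  next
    case (Suc k)
    then have pos: "h (Suc k) > 0" using q by (meson mult_pos_pos order_less_le_trans)
    have "h k * (q * h (Suc k)) \<le> h (Suc k) * h (Suc k)"
      using mult_right_mono[OF conjunct1[OF Suc] less_imp_le[OF pos]] by (simp only: ac_simps)
    also have "\<dots> \<le> h k * h (Suc (Suc k))"
      using cnorm2_pow_hermitian_log_convex[OF A y, of k] unfolding h_def power2_eq_square .
    finally show ?case using Suc pos by simp
  qed
  show ?thesis unfolding h_def[symmetric]
  proof (induction k)
    case 0 show ?case using Ac y unfolding h_def by simp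
  next
    case (Suc k)
    have "q ^ Suc k * cnorm2 n y = q * (q ^ k * cnorm2 n y)" by simp
    also have "\<dots> \<le> q * h k" using Suc q by simp
    also have "\<dots> \<le> h (Suc k)" using grow[of k] by simp
    finally show ?case .
  qed
qed

lemma hermitian_cnorm2_le_spectral_radius:
  assumes A: "hermitian_mat n A" and n: "0 < n" and y: "y \<in> carrier_vec n"
  shows "cnorm2 n (A *\<^sub>v y) \<le> (spectral_radius A)\<^sup>2 * cnorm2 n y"
proof (rule ccontr)
  \<comment> \<open>If \<open>|A y|\<^sup>2 = q |y|\<^sup>2\<close> with \<open>q > \<rho>(A)\<^sup>2\<close>, log-convexity forces \<open>|A\<^sup>k y|\<^sup>2 \<ge> q\<^sup>k |y|\<^sup>2\<close>,
    which outgrows the bound \<open>D (r\<^sup>2)\<^sup>k\<close> for \<open>\<rho>(A) < r < sqrt q\<close>.\<close>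
  have Ac: "A \<in> carrier_mat n n" by (rule hermitian_matD(1)[OF A])
  have \<rho>0: "0 \<le> spectral_radius A" by (rule spectral_radius_nonneg[OF Ac n])
  assume "\<not> ?thesis"
  then have gt: "(spectral_radius A)\<^sup>2 * cnorm2 n y < cnorm2 n (A *\<^sub>v y)" by simp
  have y0: "cnorm2 n y > 0"
  proof (rule ccontr)
    assume "\<not> cnorm2 n y > 0"
    then have "y = 0\<^sub>v n" using cnorm2_nonneg[of n y] cnorm2_eq_0_iff[OF y] by simp
    moreover have "A *\<^sub>v 0\<^sub>v n = 0\<^sub>v n" using Ac by (intro eq_vecI) auto
    ultimately show False using gt cnorm2_eq_0_iff[of "0\<^sub>v n" n] by simp
  qed
  define q where "q = cnorm2 n (A *\<^sub>v y) / cnorm2 n y"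
  have q: "(spectral_radius A)\<^sup>2 < q" using gt y0 unfolding q_def by (simp add: field_simps)
  then have q0: "q > 0" by (meson le_less_trans zero_le_power2)
  define r where "r = (spectral_radius A + sqrt q) / 2"
  have "spectral_radius A < sqrt q" using q \<rho>0 by (simp add: real_less_rsqrt)
  then have r: "spectral_radius A < r" "r < sqrt q" unfolding r_def by auto
  then have r0: "r > 0" using \<rho>0 by linarith
  have "r\<^sup>2 < (sqrt q)\<^sup>2" using r(2) r0 by (intro power_strict_mono) auto
  then have r2q: "r\<^sup>2 < q" using q0 by simp
  obtain D where D: "\<And>k. cnorm2 n (A ^\<^sub>m k *\<^sub>v y) \<le> D * (r\<^sup>2) ^ k"
    using cnorm2_pow_mult_mat_vec_bound[OF Ac n r(1) y] by blast
  have "q ^ k * cnorm2 n y \<le> cnorm2 n (A ^\<^sub>m k *\<^sub>v y)" for k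
    by (rule cnorm2_pow_hermitian_lower_bound[OF A y y0 q0]) (use y0 in \<open>simp add: q_def\<close>)
  then have "(q / r\<^sup>2) ^ k \<le> D / cnorm2 n y" for k
    using order_trans[OF _ D] y0 r0 by (simp add: power_divide field_simps)
  moreover obtain k where "D / cnorm2 n y < (q / r\<^sup>2) ^ k"
    using real_arch_pow[of "q / r\<^sup>2"] r2q r0 by auto
  ultimately show False by (meson not_le)
qed

lemma spectral_radius_hermitian_shift_le:
  assumes H: "hermitian_mat n H" and n: "0 < n"
    and dist: "\<And>l. complex_of_real l \<in> spectrum H \<Longrightarrow> (l - \<kappa>)\<^sup>2 \<le> r2"
  shows "(spectral_radius (H - complex_of_real \<kappa> \<cdot>\<^sub>m 1\<^sub>m n))\<^sup>2 \<le> r2"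
proof -
  define X where "X = H - complex_of_real \<kappa> \<cdot>\<^sub>m 1\<^sub>m n"
  have Xc: "X \<in> carrier_mat n n"
    unfolding X_def by (rule hermitian_matD(1)[OF hermitian_minus_smult_one[OF H]])
  obtain \<mu> where "\<mu> \<in> spectrum X" and \<rho>: "spectral_radius X = cmod \<mu>"
    using spectral_radius_mem_max(1)[OF Xc n] by auto
  then obtain v where "eigenvector X v \<mu>" unfolding spectrum_def eigenvalue_def by auto
  then have evH: "eigenvector H v (\<mu> + complex_of_real \<kappa>)"
    unfolding X_def by (rule eigenvector_minus_smult_one[OF hermitian_matD(1)[OF H]])
  define l where "l = Re (\<mu> + complex_of_real \<kappa>)"
  have l: "\<mu> + complex_of_real \<kappa> = complex_of_real l"
    unfolding l_def by (rule eigenvalue_hermitian_real[OF H evH])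
  then have "complex_of_real l \<in> spectrum H"
    using evH unfolding spectrum_def eigenvalue_def by auto
  moreover have "\<mu> = complex_of_real (l - \<kappa>)" using l by (simp add: algebra_simps)
  ultimately show ?thesis using dist \<rho> unfolding X_def by (simp del: of_real_diff)
qed

lemma cnorm2_hermitian_shift_le:
  assumes H: "hermitian_mat n H" and n: "0 < n" and y: "y \<in> carrier_vec n"
    and dist: "\<And>l. complex_of_real l \<in> spectrum H \<Longrightarrow> (l - \<kappa>)\<^sup>2 \<le> r2"
  shows "cnorm2 n (H *\<^sub>v y) - 2 * \<kappa> * Re (cinner n (H *\<^sub>v y) y) + \<kappa>\<^sup>2 * cnorm2 n y
    \<le> r2 * cnorm2 n y"
proof -
  have Hc: "H \<in> carrier_mat n n" by (rule hermitian_matD(1)[OF H])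
  define X where "X = H - complex_of_real \<kappa> \<cdot>\<^sub>m 1\<^sub>m n"
  have "cnorm2 n (H *\<^sub>v y) - 2 * \<kappa> * Re (cinner n (H *\<^sub>v y) y) + \<kappa>\<^sup>2 * cnorm2 n y
      = 1\<^sup>2 * cnorm2 n (H *\<^sub>v y) + 2 * 1 * (- \<kappa>) * Re (cinner n y (H *\<^sub>v y)) + (- \<kappa>)\<^sup>2 * cnorm2 n y"
    by (simp add: Re_cinner_commute[of n y "H *\<^sub>v y"])
  also have "\<dots> = cnorm2 n (X *\<^sub>v y)"
    by (rule cnorm2_lincomb[symmetric])
      (simp add: X_def index_smult_one_mult_mat_vec(3)[OF Hc y] del: index_mult_mat_vec)
  also have "\<dots> \<le> (spectral_radius X)\<^sup>2 * cnorm2 n y"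
    unfolding X_def by (rule hermitian_cnorm2_le_spectral_radius[OF hermitian_minus_smult_one[OF H] n y])
  also have "\<dots> \<le> r2 * cnorm2 n y"
    unfolding X_def by (rule mult_right_mono[OF spectral_radius_hermitian_shift_le[OF H n dist] cnorm2_nonneg])
  finally show ?thesis .
qed

lemma hermitian_quadratic_form_le:
  assumes H: "hermitian_mat n H" and n: "0 < n" and a: "a > 0" and y: "y \<in> carrier_vec n"
    and spec: "\<And>l. complex_of_real l \<in> spectrum H \<Longrightarrow> a * l\<^sup>2 + b * l + c \<le> 0"
  shows "a * cnorm2 n (H *\<^sub>v y) + b * Re (cinner n (H *\<^sub>v y) y) + c * cnorm2 n y \<le> 0"
proof -
  \<comment> \<open>Completing the square, the hypothesis puts every eigenvalue within \<open>sqrt r2\<close> of \<open>\<kappa>\<close>.\<close>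
  define \<kappa> where "\<kappa> = - b / (2 * a)"
  define r2 where "r2 = \<kappa>\<^sup>2 - c / a"
  have square: "a * ((t - \<kappa>)\<^sup>2 - r2) = a * t\<^sup>2 + b * t + c" for t
    unfolding \<kappa>_def r2_def using a by (simp add: power2_eq_square field_simps)
  have "(l - \<kappa>)\<^sup>2 \<le> r2" if "complex_of_real l \<in> spectrum H" for l
  proof -
    have "a * ((l - \<kappa>)\<^sup>2 - r2) \<le> 0" using spec[OF that] square[of l] by simp
    then show ?thesis using a by (auto simp: mult_le_0_iff)
  qed
  then have "cnorm2 n (H *\<^sub>v y) - 2 * \<kappa> * Re (cinner n (H *\<^sub>v y) y) + (\<kappa>\<^sup>2 - r2) * cnorm2 n y \<le> 0"
    using cnorm2_hermitian_shift_le[OF H n y] by (simp add: algebra_simps)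
  then have "a * (cnorm2 n (H *\<^sub>v y) - 2 * \<kappa> * Re (cinner n (H *\<^sub>v y) y)
      + (\<kappa>\<^sup>2 - r2) * cnorm2 n y) \<le> 0"
    using a by (simp add: mult_nonneg_nonpos)
  moreover have "a * (cnorm2 n (H *\<^sub>v y) - 2 * \<kappa> * Re (cinner n (H *\<^sub>v y) y)
      + (\<kappa>\<^sup>2 - r2) * cnorm2 n y)
    = a * cnorm2 n (H *\<^sub>v y) + b * Re (cinner n (H *\<^sub>v y) y) + c * cnorm2 n y"
    unfolding \<kappa>_def r2_def using a by (simp add: field_simps power2_eq_square)
  ultimately show ?thesis by simp
qed

section \<open>Block-diagonal embedding of real symmetric matrices\<close>

lemma sum_lessThan_double:
  "(\<Sum>j=0..<2*(m::nat). f j) = (\<Sum>j=0..<m. f j) + (\<Sum>j=0..<m. f (j + m))"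
proof -
  have "(\<Sum>j=0..<2*m. f j) = (\<Sum>j=0..<m. f j) + (\<Sum>j=m..<2*m. f j)"
    by (rule sum.atLeastLessThan_concat[symmetric]) auto
  also have "(\<Sum>j=m..<2*m. f j) = (\<Sum>j=0..<m. f (j + m))"
    using sum.shift_bounds_nat_ivl[of f 0 m m] by (simp add: mult_2)
  finally show ?thesis .
qed

lemma blkdiag2_carrier: "S \<in> carrier_mat m m \<Longrightarrow> blkdiag2 m S \<in> carrier_mat (2*m) (2*m)"
  unfolding blkdiag2_def cmat_def by (simp add: mult_2)

lemma index_blkdiag2:
  assumes "S \<in> carrier_mat m m" "i < 2*m" "j < 2*m"
  shows "blkdiag2 m S $$ (i,j) = (if i < m then if j < m then complex_of_real (S$$(i,j)) else 0
      else if j < m then 0 else complex_of_real (S$$(i-m,j-m)))"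
  using assms unfolding blkdiag2_def cmat_def by (simp add: mult_2)

lemma blkdiag2_mult_mat_vec:
  assumes S: "S \<in> carrier_mat m m" and v: "v \<in> carrier_vec (2*m)" and i: "i < m"
  shows "(blkdiag2 m S *\<^sub>v v) $ i = (\<Sum>j=0..<m. complex_of_real (S$$(i,j)) * v$j)"
    and "(blkdiag2 m S *\<^sub>v v) $ (i+m) = (\<Sum>j=0..<m. complex_of_real (S$$(i,j)) * v$(j+m))"
  using i by (simp_all add: index_mult_mat_vec_sum[OF blkdiag2_carrier[OF S] v]
      sum_lessThan_double index_blkdiag2[OF S])

lemma hermitian_blkdiag2:
  assumes S: "S \<in> carrier_mat m m" and sym: "transpose_mat S = S"
  shows "hermitian_mat (2*m) (blkdiag2 m S)"
proof -
  have "S$$(i,j) = S$$(j,i)" if "i < m" "j < m" for i j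
    using that S arg_cong[OF sym, of "\<lambda>A. A $$ (i,j)"] by simp
  then show ?thesis using blkdiag2_carrier[OF S] unfolding hermitian_mat_def
    by (auto simp: index_blkdiag2[OF S])
qed

lemma eigenvalue_of_complex_eigenvector:
  fixes S :: "real mat"
  assumes S: "S \<in> carrier_mat m m" and k: "k < m" and wk: "w k \<noteq> 0"
    and ev: "\<And>i. i < m \<Longrightarrow> (\<Sum>j=0..<m. complex_of_real (S$$(i,j)) * w j) = complex_of_real r * w i"
  shows "eigenvalue S r"
proof -
  have eigen_part: "eigenvalue S r"
    if part_ev: "\<And>i. i < m \<Longrightarrow> (\<Sum>j=0..<m. S$$(i,j) * f (w j)) = r * f (w i)"
      and nz: "f (w k) \<noteq> 0" for f
  proof -
    define a where "a = vec m (\<lambda>j. f (w j))"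
    have a: "a \<in> carrier_vec m" "a \<noteq> 0\<^sub>v m"
      using k nz unfolding a_def by (auto dest!: arg_cong[of _ _ "\<lambda>x. x $ k"])
    have "S *\<^sub>v a = r \<cdot>\<^sub>v a"
      using S part_ev unfolding a_def by (intro eq_vecI) (auto simp: scalar_prod_def)
    then show ?thesis using S a unfolding eigenvalue_def eigenvector_def by auto
  qed
  show ?thesis
  proof (cases "Re (w k) = 0")
    case False
    show ?thesis
      by (rule eigen_part[where f = Re]) (use False arg_cong[OF ev, where f = Re] in \<open>auto simp: Re_sum\<close>)
  next
    case True
    then have "Im (w k) \<noteq> 0" using wk complex.expand[of "w k" 0] by auto
    then show ?thesis
      by (intro eigen_part[where f = Im]) (use arg_cong[OF ev, where f = Im] in \<open>auto simp: Im_sum\<close>)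
  qed
qed

lemma eigenvalue_blkdiag2:
  assumes S: "S \<in> carrier_mat m m" and sym: "transpose_mat S = S"
    and ev: "eigenvalue (blkdiag2 m S) \<mu>"
  shows "\<mu> = complex_of_real (Re \<mu>)" and "Re \<mu> \<in> spectrum S"
proof -
  obtain v where evv: "eigenvector (blkdiag2 m S) v \<mu>" using ev unfolding eigenvalue_def by auto
  show real: "\<mu> = complex_of_real (Re \<mu>)"
    by (rule eigenvalue_hermitian_real[OF hermitian_blkdiag2[OF S sym] evv])
  have v: "v \<in> carrier_vec (2*m)" "v \<noteq> 0\<^sub>v (2*m)" and Bv: "blkdiag2 m S *\<^sub>v v = \<mu> \<cdot>\<^sub>v v"
    using evv blkdiag2_carrier[OF S] unfolding eigenvector_def by auto
  obtain k where k: "k < 2*m" and vk: "v $ k \<noteq> 0"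
    using v by (metis eq_vecI index_zero_vec(1,2) carrier_vecD)
  have ev_upper: "(\<Sum>j=0..<m. complex_of_real (S$$(i,j)) * v$j) = complex_of_real (Re \<mu>) * v$i"
    and ev_lower: "(\<Sum>j=0..<m. complex_of_real (S$$(i,j)) * v$(j+m)) = complex_of_real (Re \<mu>) * v$(i+m)"
    if "i < m" for i
    using that v arg_cong[OF Bv, of "\<lambda>x. x $ i"] arg_cong[OF Bv, of "\<lambda>x. x $ (i+m)"]
    by (simp_all add: blkdiag2_mult_mat_vec[OF S v(1)] flip: real)
  have "eigenvalue S (Re \<mu>)"
  proof (cases "k < m")
    case True
    show ?thesis by (rule eigenvalue_of_complex_eigenvector[OF S True, of "\<lambda>j. v$j"])
      (use vk ev_upper in auto)
  next
    case False
    then have k': "k - m < m" "k - m + m = k" using k by auto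
    show ?thesis by (rule eigenvalue_of_complex_eigenvector[OF S k'(1), of "\<lambda>j. v$(j+m)"])
      (use vk ev_lower k' in auto)
  qed
  then show "Re \<mu> \<in> spectrum S" unfolding spectrum_def by auto
qed

lemma spectrum_spd_pos:
  assumes "spd_mat m S" and "l \<in> spectrum S"
  shows "l > 0"
proof -
  have S: "S \<in> carrier_mat m m"
    and pd: "\<And>x. x \<in> carrier_vec m \<Longrightarrow> x \<noteq> 0\<^sub>v m \<Longrightarrow> x \<bullet> (S *\<^sub>v x) > 0"
    using assms(1) unfolding spd_mat_def by auto
  obtain x where "eigenvector S x l" using assms(2) unfolding spectrum_def eigenvalue_def by auto
  then have x: "x \<in> carrier_vec m" "x \<noteq> 0\<^sub>v m" and Sx: "S *\<^sub>v x = l \<cdot>\<^sub>v x"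
    using S unfolding eigenvector_def by auto
  have "x \<bullet> (S *\<^sub>v x) = l * (x \<bullet> x)" unfolding Sx using x by simp
  moreover have "x \<bullet> x \<ge> 0" unfolding scalar_prod_def by (intro sum_nonneg) auto
  ultimately show ?thesis using pd[OF x] by (metis mult_nonpos_nonneg not_less)
qed

lemma spectrum_symmetric_nonempty:
  fixes S :: "real mat"
  assumes S: "S \<in> carrier_mat m m" and sym: "transpose_mat S = S" and m: "m > 0"
  shows "spectrum S \<noteq> {}"
proof -
  obtain \<mu> where "\<mu> \<in> spectrum (blkdiag2 m S)"
    using spectrum_non_empty[OF blkdiag2_carrier[OF S]] m by auto
  then have "Re \<mu> \<in> spectrum S" using eigenvalue_blkdiag2(2)[OF S sym] unfolding spectrum_def by auto
  then show ?thesis by auto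
qed

section \<open>The matrix R\<close>

definition scalar_blocks :: "nat \<Rightarrow> complex \<Rightarrow> complex \<Rightarrow> complex \<Rightarrow> complex \<Rightarrow> complex mat" where
  "scalar_blocks m a b d e = four_block_mat (a \<cdot>\<^sub>m 1\<^sub>m m) (b \<cdot>\<^sub>m 1\<^sub>m m) (d \<cdot>\<^sub>m 1\<^sub>m m) (e \<cdot>\<^sub>m 1\<^sub>m m)"

lemma scalar_blocks_carrier: "scalar_blocks m a b d e \<in> carrier_mat (2*m) (2*m)"
  unfolding scalar_blocks_def by (simp add: mult_2)

lemma scalar_blocks_commute:
  assumes C: "C \<in> carrier_mat m m"
  shows "scalar_blocks m a b d e * four_block_mat C (0\<^sub>m m m) (0\<^sub>m m m) C
    = four_block_mat C (0\<^sub>m m m) (0\<^sub>m m m) C * scalar_blocks m a b d e"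
proof -
  have one: "1\<^sub>m m \<in> carrier_mat m m" and zero: "0\<^sub>m m m \<in> carrier_mat m m" by simp_all
  have sc: "x \<cdot>\<^sub>m 1\<^sub>m m \<in> carrier_mat m m" for x :: complex by simp
  have "(x \<cdot>\<^sub>m 1\<^sub>m m) * C = x \<cdot>\<^sub>m C" "C * (x \<cdot>\<^sub>m 1\<^sub>m m) = x \<cdot>\<^sub>m C" for x
    using C by (simp_all add: mult_smult_assoc_mat[OF one C] mult_smult_distrib[OF C one])
  then show ?thesis unfolding scalar_blocks_def
      mult_four_block_mat[OF sc sc sc sc C zero zero C] mult_four_block_mat[OF C zero zero C sc sc sc sc]
    using C by simp
qed

lemma scalar_blocks_square:
  "scalar_blocks m a b d e * scalar_blocks m a b d e
   = four_block_mat ((a*a + b*d) \<cdot>\<^sub>m 1\<^sub>m m) ((a*b + b*e) \<cdot>\<^sub>m 1\<^sub>m m)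
      ((d*a + e*d) \<cdot>\<^sub>m 1\<^sub>m m) ((d*b + e*e) \<cdot>\<^sub>m 1\<^sub>m m)"
proof -
  have "(x \<cdot>\<^sub>m 1\<^sub>m m) * (y \<cdot>\<^sub>m 1\<^sub>m m) = (x * y) \<cdot>\<^sub>m 1\<^sub>m m"
    "(x \<cdot>\<^sub>m 1\<^sub>m m) + (y \<cdot>\<^sub>m 1\<^sub>m m) = (x + y) \<cdot>\<^sub>m 1\<^sub>m m" for x y :: complex
    by (auto intro!: eq_matI simp: distrib_right)
  moreover have sc: "x \<cdot>\<^sub>m 1\<^sub>m m \<in> carrier_mat m m" for x :: complex by simp
  ultimately show ?thesis unfolding scalar_blocks_def mult_four_block_mat[OF sc sc sc sc sc sc sc sc]
    by simp
qed

lemma Rmat_eq_scalar_blocks: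
  "Rmat m \<nu> \<omega> = complex_of_real (1 / sqrt (\<nu> * (1 + \<nu> * \<omega>\<^sup>2))) \<cdot>\<^sub>m
     scalar_blocks m (- \<i> * complex_of_real (\<omega> * \<nu>)) (complex_of_real (sqrt \<nu>))
       (complex_of_real (- sqrt \<nu>)) (\<i> * complex_of_real (\<omega> * \<nu>))"
  unfolding Rmat_def scalar_blocks_def Let_def ..

lemma Rmat_carrier: "Rmat m \<nu> \<omega> \<in> carrier_mat (2*m) (2*m)"
  unfolding Rmat_eq_scalar_blocks using scalar_blocks_carrier by simp

lemma Rmat_skew:
  assumes "\<nu> > 0" "i < 2*m" "j < 2*m"
  shows "Rmat m \<nu> \<omega> $$ (i,j) = - cnj (Rmat m \<nu> \<omega> $$ (j,i))"
  using assms unfolding Rmat_eq_scalar_blocks scalar_blocks_def by (auto simp: mult_2)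

lemma Rmat_square:
  assumes \<nu>: "\<nu> > 0"
  shows "Rmat m \<nu> \<omega> * Rmat m \<nu> \<omega> = (-1) \<cdot>\<^sub>m 1\<^sub>m (2*m)"
proof -
  define k where "k = complex_of_real (1 / sqrt (\<nu> * (1 + \<nu> * \<omega>\<^sup>2)))"
  define a where "a = - \<i> * complex_of_real (\<omega> * \<nu>)"
  define b where "b = complex_of_real (sqrt \<nu>)"
  define F where "F = scalar_blocks m a (complex_of_real (sqrt \<nu>)) (- b) (- a)"
  have F: "F \<in> carrier_mat (2*m) (2*m)" unfolding F_def by (rule scalar_blocks_carrier)
  have \<theta>: "\<nu> * (1 + \<nu> * \<omega>\<^sup>2) > 0" using \<nu> by (simp add: add_pos_nonneg)
  have kk: "k * k * (a * a - b * b) = -1"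
  proof -
    have "a * a - b * b = - complex_of_real (\<nu> * (1 + \<nu> * \<omega>\<^sup>2))"
      unfolding a_def b_def using \<nu> by (simp add: power2_eq_square algebra_simps flip: of_real_mult)
    moreover have "k * k = complex_of_real (1 / (\<nu> * (1 + \<nu> * \<omega>\<^sup>2)))"
      unfolding k_def using \<theta> by (simp flip: of_real_mult add: real_sqrt_mult_self)
    moreover have "\<nu> \<noteq> 0" "1 + \<nu> * \<omega>\<^sup>2 \<noteq> 0" using \<theta> \<nu> by auto
    ultimately show ?thesis by (simp flip: of_real_mult)
  qed
  have "Rmat m \<nu> \<omega> = k \<cdot>\<^sub>m F"
    unfolding Rmat_eq_scalar_blocks F_def k_def a_def b_def by (simp add: of_real_minus)
  then have "Rmat m \<nu> \<omega> * Rmat m \<nu> \<omega> = k \<cdot>\<^sub>m (k \<cdot>\<^sub>m (F * F))"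
    by (simp add: mult_smult_assoc_mat[OF F smult_carrier_mat[OF F]] mult_smult_distrib[OF F F])
  also have "\<dots> = (-1) \<cdot>\<^sub>m 1\<^sub>m (2*m)"
    unfolding F_def scalar_blocks_square b_def[symmetric] using kk
    by (intro eq_matI) (auto simp: mult_2 algebra_simps)
  finally show ?thesis .
qed

lemma Rmat_blkdiag2_commute:
  assumes S: "S \<in> carrier_mat m m"
  shows "Rmat m \<nu> \<omega> * blkdiag2 m S = blkdiag2 m S * Rmat m \<nu> \<omega>"
proof -
  define F where "F = scalar_blocks m (- \<i> * complex_of_real (\<omega> * \<nu>)) (complex_of_real (sqrt \<nu>))
     (complex_of_real (- sqrt \<nu>)) (\<i> * complex_of_real (\<omega> * \<nu>))"
  have F: "F \<in> carrier_mat (2*m) (2*m)" unfolding F_def by (rule scalar_blocks_carrier)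
  have B: "blkdiag2 m S \<in> carrier_mat (2*m) (2*m)" by (rule blkdiag2_carrier[OF S])
  have "F * blkdiag2 m S = blkdiag2 m S * F"
    unfolding F_def blkdiag2_def by (rule scalar_blocks_commute) (simp add: cmat_def S)
  then show ?thesis unfolding Rmat_eq_scalar_blocks F_def[symmetric]
    by (simp add: mult_smult_assoc_mat[OF F B] mult_smult_distrib[OF B F])
qed

lemma cnorm2_Rmat_shift:
  fixes S :: "real mat" and \<omega> :: real
  assumes S: "S \<in> carrier_mat m m" and sym: "transpose_mat S = S" and \<nu>: "\<nu> > 0"
    and u: "u \<in> carrier_vec (2*m)"
  shows "cnorm2 (2*m) ((complex_of_real \<alpha> \<cdot>\<^sub>m 1\<^sub>m (2*m) + complex_of_real t \<cdot>\<^sub>m (Rmat m \<nu> \<omega> * blkdiag2 m S)) *\<^sub>v u)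
      = \<alpha>\<^sup>2 * cnorm2 (2*m) u + t\<^sup>2 * cnorm2 (2*m) (blkdiag2 m S *\<^sub>v u)"
    and "cnorm2 (2*m) ((complex_of_real \<alpha> \<cdot>\<^sub>m 1\<^sub>m (2*m) - complex_of_real t \<cdot>\<^sub>m (Rmat m \<nu> \<omega> * blkdiag2 m S)) *\<^sub>v u)
      = \<alpha>\<^sup>2 * cnorm2 (2*m) u + t\<^sup>2 * cnorm2 (2*m) (blkdiag2 m S *\<^sub>v u)"
proof -
  have RHc: "Rmat m \<nu> \<omega> * blkdiag2 m S \<in> carrier_mat (2*m) (2*m)"
    using Rmat_carrier blkdiag2_carrier[OF S] by (rule mult_carrier_mat)
  have shift: "cnorm2 (2*m) z = a\<^sup>2 * cnorm2 (2*m) u + b\<^sup>2 * cnorm2 (2*m) (blkdiag2 m S *\<^sub>v u)"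
    if "\<And>i. i < 2*m \<Longrightarrow> z$i = complex_of_real a * u$i
       + complex_of_real b * ((Rmat m \<nu> \<omega> * blkdiag2 m S) *\<^sub>v u)$i" for z a b
    by (rule cnorm2_smult_one_add_skew_hermitian[OF Rmat_carrier _ Rmat_square[OF \<nu>]
          hermitian_blkdiag2[OF S sym] Rmat_blkdiag2_commute[OF S] u])
      (rule Rmat_skew[OF \<nu>], assumption, assumption, rule that, assumption)
  note entries = index_smult_one_mult_mat_vec[OF RHc u]
  show "cnorm2 (2*m) ((complex_of_real \<alpha> \<cdot>\<^sub>m 1\<^sub>m (2*m) + complex_of_real t \<cdot>\<^sub>m (Rmat m \<nu> \<omega> * blkdiag2 m S)) *\<^sub>v u)
      = \<alpha>\<^sup>2 * cnorm2 (2*m) u + t\<^sup>2 * cnorm2 (2*m) (blkdiag2 m S *\<^sub>v u)"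
    by (rule shift) (rule entries(1))
  have "cnorm2 (2*m) ((complex_of_real \<alpha> \<cdot>\<^sub>m 1\<^sub>m (2*m) - complex_of_real t \<cdot>\<^sub>m (Rmat m \<nu> \<omega> * blkdiag2 m S)) *\<^sub>v u)
      = \<alpha>\<^sup>2 * cnorm2 (2*m) u + (- t)\<^sup>2 * cnorm2 (2*m) (blkdiag2 m S *\<^sub>v u)"
    by (rule shift) (simp only: entries(2) of_real_minus mult_minus_left diff_conv_add_uminus)
  then show "cnorm2 (2*m) ((complex_of_real \<alpha> \<cdot>\<^sub>m 1\<^sub>m (2*m) - complex_of_real t \<cdot>\<^sub>m (Rmat m \<nu> \<omega> * blkdiag2 m S)) *\<^sub>v u)
      = \<alpha>\<^sup>2 * cnorm2 (2*m) u + t\<^sup>2 * cnorm2 (2*m) (blkdiag2 m S *\<^sub>v u)" by simp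
qed

section \<open>Contraction estimates for the half-steps\<close>

definition contraction_factor :: "real \<Rightarrow> real \<Rightarrow> real \<Rightarrow> real" where
  "contraction_factor \<alpha> \<tau> l = sqrt (\<alpha>\<^sup>2 + (\<tau> * l)\<^sup>2) / (\<alpha> + \<tau> * l)"

lemma contraction_factor_bounds:
  assumes "\<alpha> > 0" "\<tau> > 0" "l > 0"
  shows "0 < contraction_factor \<alpha> \<tau> l" and "contraction_factor \<alpha> \<tau> l < 1"
proof -
  have D: "\<alpha> + \<tau> * l > 0" using assms by (simp add: add_pos_pos)
  have "\<alpha>\<^sup>2 + (\<tau> * l)\<^sup>2 > 0" using assms by (simp add: add_pos_nonneg)
  then show "0 < contraction_factor \<alpha> \<tau> l" unfolding contraction_factor_def using D by simp
  have "\<alpha>\<^sup>2 + (\<tau> * l)\<^sup>2 < (\<alpha> + \<tau> * l)\<^sup>2" using assms by (simp add: power2_eq_square algebra_simps)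
  then have "sqrt (\<alpha>\<^sup>2 + (\<tau> * l)\<^sup>2) < sqrt ((\<alpha> + \<tau> * l)\<^sup>2)" by (rule real_sqrt_less_mono)
  then have "sqrt (\<alpha>\<^sup>2 + (\<tau> * l)\<^sup>2) < \<alpha> + \<tau> * l" using D by simp
  then show "contraction_factor \<alpha> \<tau> l < 1" unfolding contraction_factor_def using D by simp
qed

lemma contraction_factor_le:
  assumes "\<alpha> > 0" "\<tau> > 0" "l > 0" "contraction_factor \<alpha> \<tau> l \<le> c"
  shows "\<alpha>\<^sup>2 + (\<tau> * l)\<^sup>2 \<le> c\<^sup>2 * (\<alpha> + \<tau> * l)\<^sup>2"
proof -
  have D: "\<alpha> + \<tau> * l > 0" using assms by (simp add: add_pos_pos)
  then have "sqrt (\<alpha>\<^sup>2 + (\<tau> * l)\<^sup>2) \<le> c * (\<alpha> + \<tau> * l)"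
    using assms(4) unfolding contraction_factor_def by (simp add: divide_le_eq)
  then have "(sqrt (\<alpha>\<^sup>2 + (\<tau> * l)\<^sup>2))\<^sup>2 \<le> (c * (\<alpha> + \<tau> * l))\<^sup>2" by (rule power_mono) simp
  then show ?thesis by (simp add: power_mult_distrib)
qed

lemma cnorm2_smult_one_add_blkdiag2_bound:
  fixes S :: "real mat"
  assumes spd: "spd_mat m S" and m: "0 < m" and \<alpha>: "\<alpha> > 0" and \<tau>: "\<tau> > 0"
    and y: "y \<in> carrier_vec (2*m)"
  defines "c \<equiv> Max (contraction_factor \<alpha> \<tau> ` spectrum S)"
  shows "0 < c" and "c < 1"
    and "\<alpha>\<^sup>2 * cnorm2 (2*m) y + \<tau>\<^sup>2 * cnorm2 (2*m) (blkdiag2 m S *\<^sub>v y)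
      \<le> c\<^sup>2 * cnorm2 (2*m) ((complex_of_real \<alpha> \<cdot>\<^sub>m 1\<^sub>m (2*m) + complex_of_real \<tau> \<cdot>\<^sub>m blkdiag2 m S) *\<^sub>v y)"
proof -
  have S: "S \<in> carrier_mat m m" and sym: "transpose_mat S = S" using spd unfolding spd_mat_def by auto
  have fin: "finite (spectrum S)" by (rule card_finite_spectrum(1)[OF S])
  have pos: "\<And>l. l \<in> spectrum S \<Longrightarrow> l > 0" by (rule spectrum_spd_pos[OF spd])
  obtain l0 where l0: "l0 \<in> spectrum S" "c = contraction_factor \<alpha> \<tau> l0"
    using Max_in[OF finite_imageI[OF fin]] spectrum_symmetric_nonempty[OF S sym m]
    unfolding c_def by auto
  show c0: "0 < c" and c1: "c < 1" using contraction_factor_bounds[OF \<alpha> \<tau> pos[OF l0(1)]] l0(2) by auto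
  define H where "H = blkdiag2 m S"
  have H: "hermitian_mat (2*m) H" unfolding H_def by (rule hermitian_blkdiag2[OF S sym])
  have Hc: "H \<in> carrier_mat (2*m) (2*m)" by (rule hermitian_matD(1)[OF H])
  have "(1 - c\<^sup>2) * \<tau>\<^sup>2 * cnorm2 (2*m) (H *\<^sub>v y) + (- 2 * c\<^sup>2 * \<alpha> * \<tau>) * Re (cinner (2*m) (H *\<^sub>v y) y)
      + (1 - c\<^sup>2) * \<alpha>\<^sup>2 * cnorm2 (2*m) y \<le> 0"
  proof (rule hermitian_quadratic_form_le[OF H _ _ y])
    show "0 < 2*m" using m by simp
    show "0 < (1 - c\<^sup>2) * \<tau>\<^sup>2" using c0 c1 \<tau> by (simp add: power_less_one_iff)
    fix l assume "complex_of_real l \<in> spectrum H"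
    then have l: "l \<in> spectrum S"
      using eigenvalue_blkdiag2(2)[OF S sym] unfolding H_def spectrum_def by fastforce
    have "contraction_factor \<alpha> \<tau> l \<le> c" unfolding c_def using fin l by simp
    then have "\<alpha>\<^sup>2 + (\<tau> * l)\<^sup>2 \<le> c\<^sup>2 * (\<alpha> + \<tau> * l)\<^sup>2" by (rule contraction_factor_le[OF \<alpha> \<tau> pos[OF l]])
    then show "(1 - c\<^sup>2) * \<tau>\<^sup>2 * l\<^sup>2 + (- 2 * c\<^sup>2 * \<alpha> * \<tau>) * l + (1 - c\<^sup>2) * \<alpha>\<^sup>2 \<le> 0"
      by (simp add: power2_eq_square algebra_simps)
  qed
  moreover have "cnorm2 (2*m) ((complex_of_real \<alpha> \<cdot>\<^sub>m 1\<^sub>m (2*m) + complex_of_real \<tau> \<cdot>\<^sub>m H) *\<^sub>v y)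
      = \<alpha>\<^sup>2 * cnorm2 (2*m) y + 2 * \<alpha> * \<tau> * Re (cinner (2*m) (H *\<^sub>v y) y) + \<tau>\<^sup>2 * cnorm2 (2*m) (H *\<^sub>v y)"
    by (rule cnorm2_lincomb) (rule index_smult_one_mult_mat_vec(1)[OF Hc y])
  ultimately show "\<alpha>\<^sup>2 * cnorm2 (2*m) y + \<tau>\<^sup>2 * cnorm2 (2*m) (blkdiag2 m S *\<^sub>v y)
      \<le> c\<^sup>2 * cnorm2 (2*m) ((complex_of_real \<alpha> \<cdot>\<^sub>m 1\<^sub>m (2*m) + complex_of_real \<tau> \<cdot>\<^sub>m blkdiag2 m S) *\<^sub>v y)"
    unfolding H_def by (simp add: algebra_simps)
qed

lemma blkdiag2_half_step_bounds:
  fixes S :: "real mat" and \<omega> :: real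
  assumes spd: "spd_mat m S" and m: "0 < m" and \<nu>: "\<nu> > 0" and \<alpha>: "\<alpha> > 0" and \<tau>: "\<tau> > 0"
    and u: "u \<in> carrier_vec (2*m)"
  defines "c \<equiv> Max (contraction_factor \<alpha> \<tau> ` spectrum S)"
    and "A \<equiv> complex_of_real \<alpha> \<cdot>\<^sub>m 1\<^sub>m (2*m) + complex_of_real \<tau> \<cdot>\<^sub>m blkdiag2 m S"
    and "RH \<equiv> Rmat m \<nu> \<omega> * blkdiag2 m S"
  shows "cnorm2 (2*m) ((complex_of_real \<alpha> \<cdot>\<^sub>m 1\<^sub>m (2*m) + complex_of_real \<tau> \<cdot>\<^sub>m RH) *\<^sub>v u)
      \<le> c\<^sup>2 * cnorm2 (2*m) (A *\<^sub>v u)"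
    and "cnorm2 (2*m) ((complex_of_real \<alpha> \<cdot>\<^sub>m 1\<^sub>m (2*m) - complex_of_real \<tau> \<cdot>\<^sub>m RH) *\<^sub>v u)
      \<le> c\<^sup>2 * cnorm2 (2*m) (A *\<^sub>v u)"
    and "A *\<^sub>v u = 0\<^sub>v (2*m) \<Longrightarrow> u = 0\<^sub>v (2*m)"
proof -
  have S: "S \<in> carrier_mat m m" and sym: "transpose_mat S = S" using spd unfolding spd_mat_def by auto
  note bound = cnorm2_smult_one_add_blkdiag2_bound(3)[OF spd m \<alpha> \<tau> u, folded c_def A_def]
  note shift = cnorm2_Rmat_shift[OF S sym \<nu> u, of \<alpha> \<tau> \<omega>, folded RH_def]
  show "cnorm2 (2*m) ((complex_of_real \<alpha> \<cdot>\<^sub>m 1\<^sub>m (2*m) + complex_of_real \<tau> \<cdot>\<^sub>m RH) *\<^sub>v u)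
      \<le> c\<^sup>2 * cnorm2 (2*m) (A *\<^sub>v u)"
    unfolding shift(1) by (rule bound)
  show "cnorm2 (2*m) ((complex_of_real \<alpha> \<cdot>\<^sub>m 1\<^sub>m (2*m) - complex_of_real \<tau> \<cdot>\<^sub>m RH) *\<^sub>v u)
      \<le> c\<^sup>2 * cnorm2 (2*m) (A *\<^sub>v u)"
    unfolding shift(2) by (rule bound)
  assume "A *\<^sub>v u = 0\<^sub>v (2*m)"
  then have "cnorm2 (2*m) (A *\<^sub>v u) = 0" using cnorm2_eq_0_iff[of "0\<^sub>v (2*m)"] by simp
  then have "\<alpha>\<^sup>2 * cnorm2 (2*m) u + \<tau>\<^sup>2 * cnorm2 (2*m) (blkdiag2 m S *\<^sub>v u) \<le> 0"
    using bound by simp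
  moreover have "0 \<le> \<tau>\<^sup>2 * cnorm2 (2*m) (blkdiag2 m S *\<^sub>v u)" by (simp add: cnorm2_nonneg)
  ultimately have "\<alpha>\<^sup>2 * cnorm2 (2*m) u \<le> 0" by linarith
  then have "cnorm2 (2*m) u = 0" using \<alpha> cnorm2_nonneg[of "2*m" u] by (simp add: mult_le_0_iff)
  then show "u = 0\<^sub>v (2*m)" using cnorm2_eq_0_iff[OF u] by blast
qed

section \<open>Spectral radius and convergence of the MBAS iteration\<close>

lemma minv_right_inverse:
  fixes A :: "complex mat"
  assumes A: "A \<in> carrier_mat n n" and inj: "\<And>y. y \<in> carrier_vec n \<Longrightarrow> A *\<^sub>v y = 0\<^sub>v n \<Longrightarrow> y = 0\<^sub>v n"
  shows "minv A \<in> carrier_mat n n" and "A * minv A = 1\<^sub>m n"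
proof -
  have "det A \<noteq> 0" using det_0_iff_vec_prod_zero[OF A] inj by blast
  then have U: "A \<in> Units (ring_mat TYPE(complex) n undefined)" by (rule det_non_zero_imp_unit[OF A])
  obtain B where B: "mat_inverse A = Some B"
  proof (cases "mat_inverse A")
    case None
    then show ?thesis using mat_inverse(1)[OF A None, of undefined] U by blast
  qed auto
  then show "minv A \<in> carrier_mat n n" "A * minv A = 1\<^sub>m n"
    using mat_inverse(2)[OF A B] unfolding minv_def by auto
qed

lemma spectral_radius_le_of_cnorm2_bounds:
  fixes A1 A2 B1 B2 M1 M2 :: "complex mat"
  assumes carrier: "A1 \<in> carrier_mat n n" "A2 \<in> carrier_mat n n" "B1 \<in> carrier_mat n n"
      "B2 \<in> carrier_mat n n" "M1 \<in> carrier_mat n n" "M2 \<in> carrier_mat n n"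
    and n: "0 < n" and M1: "A1 * M1 = 1\<^sub>m n" and M2: "A2 * M2 = 1\<^sub>m n"
    and A2: "\<And>v. v \<in> carrier_vec n \<Longrightarrow> v \<noteq> 0\<^sub>v n \<Longrightarrow> A2 *\<^sub>v v \<noteq> 0\<^sub>v n"
    and B1: "\<And>u. u \<in> carrier_vec n \<Longrightarrow> cnorm2 n (B1 *\<^sub>v u) \<le> c1\<^sup>2 * cnorm2 n (A1 *\<^sub>v u)"
    and B2: "\<And>v. v \<in> carrier_vec n \<Longrightarrow> cnorm2 n (B2 *\<^sub>v v) \<le> c2\<^sup>2 * cnorm2 n (A2 *\<^sub>v v)"
    and c: "0 \<le> c1" "0 \<le> c2"
  shows "spectral_radius (M2 * B1 * M1 * B2) \<le> c1 * c2"
proof -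
  define P where "P = M2 * B1 * M1 * B2"
  have P: "P \<in> carrier_mat n n" unfolding P_def using carrier by (meson mult_carrier_mat)
  obtain ev v where "spectral_radius P = cmod ev" and "eigenvector P v ev"
    using spectral_radius_mem_max(1)[OF P n] unfolding spectrum_def eigenvalue_def by auto
  then have \<rho>: "spectral_radius P = cmod ev" and v: "v \<in> carrier_vec n" "v \<noteq> 0\<^sub>v n"
    and Pv: "P *\<^sub>v v = ev \<cdot>\<^sub>v v" using P unfolding eigenvector_def by auto
  define u where "u = M1 *\<^sub>v (B2 *\<^sub>v v)"
  have B2v: "B2 *\<^sub>v v \<in> carrier_vec n" and u: "u \<in> carrier_vec n"
    unfolding u_def using carrier v by simp_all
  have "A1 *\<^sub>v u = (A1 * M1) *\<^sub>v (B2 *\<^sub>v v)"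
    unfolding u_def by (rule assoc_mult_mat_vec[symmetric, OF carrier(1,5) B2v])
  then have A1u: "A1 *\<^sub>v u = B2 *\<^sub>v v" using B2v by (simp add: M1)
  have "P *\<^sub>v v = (M2 * B1 * M1) *\<^sub>v (B2 *\<^sub>v v)"
    unfolding P_def using carrier v by (intro assoc_mult_mat_vec) auto
  also have "\<dots> = (M2 * B1) *\<^sub>v u"
    unfolding u_def using carrier B2v by (intro assoc_mult_mat_vec) auto
  also have "\<dots> = M2 *\<^sub>v (B1 *\<^sub>v u)" using carrier u by (intro assoc_mult_mat_vec) auto
  finally have M2B1u: "M2 *\<^sub>v (B1 *\<^sub>v u) = ev \<cdot>\<^sub>v v" using Pv by simp
  have B1u: "B1 *\<^sub>v u \<in> carrier_vec n" using carrier u by simp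
  have "B1 *\<^sub>v u = (A2 * M2) *\<^sub>v (B1 *\<^sub>v u)" using B1u by (simp add: M2)
  also have "\<dots> = A2 *\<^sub>v (ev \<cdot>\<^sub>v v)"
    unfolding M2B1u[symmetric] by (rule assoc_mult_mat_vec[OF carrier(2,6) B1u])
  also have "\<dots> = ev \<cdot>\<^sub>v (A2 *\<^sub>v v)" by (rule mult_mat_vec[OF carrier(2) v(1)])
  finally have B1u: "B1 *\<^sub>v u = ev \<cdot>\<^sub>v (A2 *\<^sub>v v)" .
  have N: "cnorm2 n (A2 *\<^sub>v v) > 0" using A2[OF v] carrier v by (simp add: cnorm2_pos)
  have "(cmod ev)\<^sup>2 * cnorm2 n (A2 *\<^sub>v v) = cnorm2 n (B1 *\<^sub>v u)"
    using carrier v by (simp add: B1u cnorm2_smult)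
  also have "\<dots> \<le> c1\<^sup>2 * cnorm2 n (B2 *\<^sub>v v)" using B1[OF u] unfolding A1u .
  also have "\<dots> \<le> c1\<^sup>2 * (c2\<^sup>2 * cnorm2 n (A2 *\<^sub>v v))" by (rule mult_left_mono[OF B2[OF v(1)]]) simp
  finally have "(cmod ev)\<^sup>2 \<le> (c1 * c2)\<^sup>2" using N by (simp add: power_mult_distrib)
  then have "cmod ev \<le> c1 * c2" by (rule power2_le_imp_le) (use c in simp)
  then show ?thesis unfolding P_def[symmetric] \<rho> .
qed

lemma eta_MBAS_eq:
  assumes "\<nu> > 0"
  shows "eta_MBAS M K \<nu> \<omega> \<alpha>
    = Max (contraction_factor \<alpha> (1 + \<nu> * \<omega>\<^sup>2) ` spectrum M)
      * Max (contraction_factor \<alpha> (sqrt (\<nu> * (1 + \<nu> * \<omega>\<^sup>2))) ` spectrum K)"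
proof -
  have "(sqrt (\<nu> * (1 + \<nu> * \<omega>\<^sup>2)))\<^sup>2 = \<nu> * (1 + \<nu> * \<omega>\<^sup>2)"
    using assms by (simp add: add_pos_nonneg less_imp_le)
  then show ?thesis
    unfolding eta_MBAS_def Let_def contraction_factor_def[abs_def] power_mult_distrib by simp
qed

lemma P_MBAS_spectral_radius_le:
  fixes M K :: "real mat"
  assumes m: "0 < m" and sM: "spd_mat m M" and sK: "spd_mat m K" and \<nu>: "\<nu> > 0" and \<alpha>: "\<alpha> > 0"
  shows "spectral_radius (P_MBAS m M K \<nu> \<omega> \<alpha>) \<le> eta_MBAS M K \<nu> \<omega> \<alpha>"
    and "eta_MBAS M K \<nu> \<omega> \<alpha> < 1"
    and "P_MBAS m M K \<nu> \<omega> \<alpha> \<in> carrier_mat (2*m) (2*m)"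
    and "Q_MBAS m M K \<nu> \<omega> \<alpha> \<in> carrier_mat (2*m) (2*m)"
proof -
  define \<theta> where "\<theta> = 1 + \<nu> * \<omega>\<^sup>2"
  define s where "s = sqrt (\<nu> * \<theta>)"
  have \<theta>: "\<theta> > 0" unfolding \<theta>_def using \<nu> by (simp add: add_pos_nonneg)
  have s: "s > 0" unfolding s_def using \<nu> \<theta> by simp
  define I where "I = (1\<^sub>m (2*m) :: complex mat)"
  define A1 where "A1 = complex_of_real \<alpha> \<cdot>\<^sub>m I + complex_of_real \<theta> \<cdot>\<^sub>m blkdiag2 m M"
  define B1 where "B1 = complex_of_real \<alpha> \<cdot>\<^sub>m I + complex_of_real \<theta> \<cdot>\<^sub>m (Rmat m \<nu> \<omega> * blkdiag2 m M)"
  define A2 where "A2 = complex_of_real \<alpha> \<cdot>\<^sub>m I + complex_of_real s \<cdot>\<^sub>m blkdiag2 m K"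
  define B2 where "B2 = complex_of_real \<alpha> \<cdot>\<^sub>m I - complex_of_real s \<cdot>\<^sub>m (Rmat m \<nu> \<omega> * blkdiag2 m K)"
  define c1 where "c1 = Max (contraction_factor \<alpha> \<theta> ` spectrum M)"
  define c2 where "c2 = Max (contraction_factor \<alpha> s ` spectrum K)"
  have M: "M \<in> carrier_mat m m" and K: "K \<in> carrier_mat m m" using sM sK unfolding spd_mat_def by auto
  have carrier: "A1 \<in> carrier_mat (2*m) (2*m)" "A2 \<in> carrier_mat (2*m) (2*m)"
    "B1 \<in> carrier_mat (2*m) (2*m)" "B2 \<in> carrier_mat (2*m) (2*m)"
    unfolding A1_def A2_def B1_def B2_def I_def
    using blkdiag2_carrier[OF M] blkdiag2_carrier[OF K] Rmat_carrier[of m \<nu> \<omega>]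
    by (auto intro!: minus_carrier_mat)
  note half1 = blkdiag2_half_step_bounds[OF sM m \<nu> \<alpha> \<theta>, folded A1_def[unfolded I_def] c1_def]
  note half2 = blkdiag2_half_step_bounds[OF sK m \<nu> \<alpha> s, folded A2_def[unfolded I_def] c2_def]
  note inv1 = minv_right_inverse[OF carrier(1) half1(3)]
  note inv2 = minv_right_inverse[OF carrier(2) half2(3)]
  have c1: "0 < c1" "c1 < 1"
    using cnorm2_smult_one_add_blkdiag2_bound(1,2)[OF sM m \<alpha> \<theta> zero_carrier_vec] c1_def by auto
  have c2: "0 < c2" "c2 < 1"
    using cnorm2_smult_one_add_blkdiag2_bound(1,2)[OF sK m \<alpha> s zero_carrier_vec] c2_def by auto
  have P: "P_MBAS m M K \<nu> \<omega> \<alpha> = minv A2 * B1 * minv A1 * B2"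
    unfolding P_MBAS_def Let_def A1_def A2_def B1_def B2_def I_def s_def \<theta>_def ..
  have eta: "eta_MBAS M K \<nu> \<omega> \<alpha> = c1 * c2"
    unfolding eta_MBAS_eq[OF \<nu>] c1_def c2_def s_def \<theta>_def ..
  show "spectral_radius (P_MBAS m M K \<nu> \<omega> \<alpha>) \<le> eta_MBAS M K \<nu> \<omega> \<alpha>"
    unfolding P eta
  proof (rule spectral_radius_le_of_cnorm2_bounds[OF carrier(1,2,3,4) inv1(1) inv2(1) _ inv1(2) inv2(2)])
    show "0 < 2*m" using m by simp
  qed (use half1(1) half2(2) half2(3) c1 c2 in \<open>auto simp: B1_def B2_def I_def\<close>)
  have "c1 * c2 < 1 * 1" using c1 c2 by (intro mult_strict_mono) auto
  then show "eta_MBAS M K \<nu> \<omega> \<alpha> < 1" unfolding eta by simp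
  show "P_MBAS m M K \<nu> \<omega> \<alpha> \<in> carrier_mat (2*m) (2*m)"
    unfolding P using carrier inv1(1) inv2(1) by (meson mult_carrier_mat)
  have "Q_MBAS m M K \<nu> \<omega> \<alpha> = complex_of_real \<alpha> \<cdot>\<^sub>m (minv A2 * (I - Rmat m \<nu> \<omega>) * minv A1)"
    unfolding Q_MBAS_def Let_def A1_def A2_def I_def s_def \<theta>_def ..
  then show "Q_MBAS m M K \<nu> \<omega> \<alpha> \<in> carrier_mat (2*m) (2*m)"
    using inv1(1) inv2(1) Rmat_carrier[of m \<nu> \<omega>] unfolding I_def
    by (metis minus_carrier_mat mult_carrier_mat smult_carrier_mat)
qed

lemma affine_iterate_diff:
  fixes P :: "complex mat"
  assumes P: "P \<in> carrier_mat n n" and c: "c \<in> carrier_vec n" and x0: "x0 \<in> carrier_vec n"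
  defines "x \<equiv> \<lambda>k. ((\<lambda>x. P *\<^sub>v x + c) ^^ k) x0"
  shows "x k \<in> carrier_vec n" and "x (Suc k) - x k = P ^\<^sub>m k *\<^sub>v (x 1 - x 0)"
proof -
  have xc: "x k \<in> carrier_vec n" for k
    unfolding x_def by (induction k) (use x0 P c in auto)
  then show "x k \<in> carrier_vec n" .
  have x1: "x 1 - x 0 \<in> carrier_vec n" using xc[of 1] xc[of 0] by simp
  show "x (Suc k) - x k = P ^\<^sub>m k *\<^sub>v (x 1 - x 0)"
  proof (induction k)
    case 0 then show ?case using x1 P by simp
  next
    case (Suc k)
    have "x (Suc (Suc k)) - x (Suc k) = P *\<^sub>v x (Suc k) - P *\<^sub>v x k"
      unfolding x_def using P c xc[unfolded x_def] by (intro eq_vecI) auto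
    also have "\<dots> = P *\<^sub>v (x (Suc k) - x k)" by (rule mult_minus_distrib_mat_vec[symmetric, OF P xc xc])
    also have "\<dots> = P ^\<^sub>m Suc k *\<^sub>v (x 1 - x 0)"
      unfolding Suc pow_mat_Suc_mult_mat_vec[OF P x1] ..
    finally show ?case .
  qed
qed

lemma affine_iteration_convergent:
  fixes P :: "complex mat"
  assumes P: "P \<in> carrier_mat n n" and n: "0 < n" and \<rho>: "spectral_radius P < 1"
    and c: "c \<in> carrier_vec n" and x0: "x0 \<in> carrier_vec n" and i: "i < n"
  shows "convergent (\<lambda>k. (((\<lambda>x. P *\<^sub>v x + c) ^^ k) x0) $ i)"
proof -
  define x where "x k = ((\<lambda>x. P *\<^sub>v x + c) ^^ k) x0" for k
  note iterate = affine_iterate_diff[OF P c x0, folded x_def]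
  define d where "d = x 1 - x 0"
  have d: "d \<in> carrier_vec n" unfolding d_def using iterate(1)[of 1] iterate(1)[of 0] by simp
  define g where "g j = (P ^\<^sub>m j *\<^sub>v d) $ i" for j
  have partial_sums: "x k $ i = x0 $ i + (\<Sum>j<k. g j)" for k
  proof (induction k)
    case 0 then show ?case by (simp add: x_def)
  next
    case (Suc k)
    have "(x (Suc k) - x k) $ i = g k" unfolding g_def d_def iterate(2) ..
    then have "x (Suc k) $ i = x k $ i + g k" using iterate(1)[of k] i by (simp add: diff_eq_eq)
    then show ?case using Suc by simp
  qed
  define r where "r = (spectral_radius P + 1) / 2"
  have r: "spectral_radius P < r" "r < 1" unfolding r_def using \<rho> by auto
  then have r0: "0 < r" using spectral_radius_nonneg[OF P n] by linarith
  obtain C where C: "\<And>k. norm_bound (P ^\<^sub>m k) (C * r ^ k)"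
    using spectral_radius_pow_norm_bound[OF P n r(1)] by blast
  have g_bound: "norm (g j) \<le> C * (\<Sum>l=0..<n. cmod (d$l)) * r ^ j" for j
    using norm_bound_mult_mat_vec[OF pow_carrier_mat[OF P] C d i] unfolding g_def
    by (simp add: mult_ac)
  have "summable (\<lambda>j. C * (\<Sum>l=0..<n. cmod (d$l)) * r ^ j)"
    using r r0 by (intro summable_mult summable_geometric) simp
  then have "summable g" using g_bound by (rule summable_comparison_test')
  then have "(\<lambda>k. x0 $ i + (\<Sum>j<k. g j)) \<longlonglongrightarrow> x0 $ i + suminf g"
    by (intro tendsto_add tendsto_const summable_LIMSEQ)
  then show ?thesis unfolding x_def[symmetric] partial_sums by (rule convergentI)
qed

theorem theorem1:
  fixes m :: nat and M K :: "real mat" and \<nu> \<omega> :: real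
  assumes "m > 0"
    and "spd_mat m M" and "spd_mat m K"
    and "\<nu> > 0" and "\<omega> > 0"
  shows "\<forall>\<alpha>>0.
     spectral_radius (P_MBAS m M K \<nu> \<omega> \<alpha>) \<le> eta_MBAS M K \<nu> \<omega> \<alpha>
   \<and> eta_MBAS M K \<nu> \<omega> \<alpha> < 1
   \<and> (\<forall>b x0. b \<in> carrier_vec (2*m) \<longrightarrow> x0 \<in> carrier_vec (2*m) \<longrightarrow>
        (\<forall>i < 2*m. convergent (\<lambda>k.
           (((\<lambda>x. P_MBAS m M K \<nu> \<omega> \<alpha> *\<^sub>v x + Q_MBAS m M K \<nu> \<omega> \<alpha> *\<^sub>v b) ^^ k) x0) $ i)))"
proof (intro allI impI conjI)
  fix \<alpha> :: real assume \<alpha>: "\<alpha> > 0"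
  note bounds = P_MBAS_spectral_radius_le[OF assms(1-4) \<alpha>, of \<omega>]
  show "spectral_radius (P_MBAS m M K \<nu> \<omega> \<alpha>) \<le> eta_MBAS M K \<nu> \<omega> \<alpha>"
    and "eta_MBAS M K \<nu> \<omega> \<alpha> < 1" by (fact bounds(1), fact bounds(2))
  fix b x0 :: "complex vec" and i :: nat
  assume "b \<in> carrier_vec (2*m)" "x0 \<in> carrier_vec (2*m)" "i < 2*m"
  then show "convergent (\<lambda>k. (((\<lambda>x. P_MBAS m M K \<nu> \<omega> \<alpha> *\<^sub>v x + Q_MBAS m M K \<nu> \<omega> \<alpha> *\<^sub>v b) ^^ k) x0) $ i)"
    using bounds assms(1)
    by (intro affine_iteration_convergent[where n = "2*m"]) auto
qed

end
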